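(* Let $0\leq B<1$, $q\geq3$, $\Delta\geq3$, $d=\Delta-1$, and let $(R_1,\dots,R_q,C_1,\dots,C_q)$ be a positive solution of the system \[R_i\propto\Big(BC_i+\sum_{j\neq i}C_j\Big)^{d},\qquad C_j\propto\Big(BR_j+\sum_{i\neq j}R_i\Big)^{d}\qquad(i,j\in[q]).\] Let $t_R$ be the number of distinct values among $R_1,\dots,R_q$ and $t_C$ the number of distinct values among $C_1,\dots,C_q$. Then $t_R,t_C\leq3$ and $t_R=t_C$.
   Context: Proportionality constants in the system are independent of $i$ (resp. $j$). This is the tree recursion fixpoint system of the antiferromagnetic $q$-state Potts model with parameter $B$ ($B=0$: colorings). *)

theory Defs
  imports Main Complex_Main
begin

definition potts_fixpoint :: "nat \<Rightarrow> real \<Rightarrow> nat \<Rightarrow> (nat \<Rightarrow> real) \<Rightarrow> (nat \<Rightarrow> real) \<Rightarrow> bool" where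
  "potts_fixpoint q B d R C \<longleftrightarrow>
     (\<forall>i<q. R i > 0) \<and> (\<forall>j<q. C j > 0) \<and>
     (\<exists>a>0. \<forall>i<q. R i = a * (B * C i + (\<Sum>j\<in>{..<q}-{i}. C j)) ^ d) \<and>
     (\<exists>b>0. \<forall>j<q. C j = b * (B * R j + (\<Sum>i\<in>{..<q}-{j}. R i)) ^ d)"

end

theory Submission imports Defs begin

text \<open>With \<open>S\<^sub>R = \<Sum>\<^sub>i R\<^sub>i\<close> and \<open>S\<^sub>C = \<Sum>\<^sub>j C\<^sub>j\<close> the system reads \<open>R\<^sub>i = a (S\<^sub>C - (1-B) C\<^sub>i)^d\<close> and
  \<open>C\<^sub>i = b (S\<^sub>R - (1-B) R\<^sub>i)^d\<close> with positive bases, so \<open>R\<^sub>i = R\<^sub>j\<close> iff \<open>C\<^sub>i = C\<^sub>j\<close> and \<open>t\<^sub>R = t\<^sub>C\<close>.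
  Eliminating \<open>C\<^sub>i\<close>, every \<open>R\<^sub>i\<close> is a zero of \<open>F(y) = S\<^sub>C - (y/a)^(1/d) - (1-B) b (S\<^sub>R - (1-B) y)^d\<close>
  on \<open>0 < y < S\<^sub>R/(1-B)\<close>. Four zeros of \<open>F\<close> would give, by Rolle, three zeros of \<open>F'\<close>. After taking
  logarithms, \<open>F' = 0\<close> says that \<open>L(z) = (d-1) ln (S\<^sub>R - (1-B) z) + (1 - 1/d) ln z\<close> takes a fixed
  value, so Rolle again would give two zeros of \<open>L'\<close>; but \<open>L'\<close> is strictly decreasing.\<close>

lemma Rolle_has_real_derivative:
  fixes f f' :: "real \<Rightarrow> real"
  assumes "a < b" "f a = f b"
    and deriv: "\<And>x. a \<le> x \<Longrightarrow> x \<le> b \<Longrightarrow> (f has_real_derivative f' x) (at x)"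
  obtains z where "a < z" "z < b" "f' z = 0"
proof -
  have "continuous_on {a..b} f"
    using deriv by (meson DERIV_isCont atLeastAtMost_iff continuous_at_imp_continuous_on)
  moreover have "\<And>x. a < x \<Longrightarrow> x < b \<Longrightarrow> f differentiable (at x)"
    using deriv real_differentiable_def by (meson less_imp_le)
  ultimately obtain z where "a < z" "z < b" "DERIV f z :> 0"
    using Rolle[OF assms(1,2)] by blast
  moreover have "DERIV f z :> f' z"
    using deriv \<open>a < z\<close> \<open>z < b\<close> by simp
  ultimately show ?thesis
    using DERIV_unique that by blast
qed

lemma card_ge_4_obtains_increasing:
  fixes S :: "'a :: linorder set"
  assumes "finite S" "card S \<ge> 4"
  obtains a b c d where "a \<in> S" "b \<in> S" "c \<in> S" "d \<in> S" "a < b" "b < c" "c < d"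
proof -
  define xs where "xs = sorted_list_of_set S"
  have len: "length xs = card S" and "sorted_wrt (<) xs" and set: "set xs = S"
    using assms(1) unfolding xs_def by simp_all
  then have "xs!0 < xs!1" "xs!1 < xs!2" "xs!2 < xs!3"
    using assms(2) by (auto simp: sorted_wrt_iff_nth_less)
  moreover have "xs!0 \<in> S" "xs!1 \<in> S" "xs!2 \<in> S" "xs!3 \<in> S"
    using set len assms(2) by (auto intro!: nth_mem[of _ xs, simplified set])
  ultimately show ?thesis
    using that by blast
qed

lemma card_image_eq_if_same_level_sets:
  assumes "\<And>i j. i \<in> A \<Longrightarrow> j \<in> A \<Longrightarrow> f i = f j \<longleftrightarrow> g i = g j"
  shows "card (f ` A) = card (g ` A)"
proof -
  define h where "h y = g (inv_into A f y)" for y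
  have "g ` A = h ` f ` A"
    unfolding h_def image_image using assms by (intro image_cong) (metis f_inv_into_f imageI inv_into_into)+
  moreover have "inj_on h (f ` A)"
    unfolding h_def using assms by (intro inj_onI) (metis f_inv_into_f inv_into_into)
  ultimately show ?thesis
    by (simp add: card_image)
qed

lemma critical_point_ln_eq:
  fixes k b m e S z :: real and d :: nat
  assumes "k > 0" "b > 0" "m > 0" "e > 0" "d \<ge> 1" "0 < z" "m * z < S"
    and crit: "k * e * z powr (e - 1) = b * d * m * (S - m * z) ^ (d - 1)"
  shows "(real d - 1) * ln (S - m * z) + (1 - e) * ln z = ln (k * e) - ln (b * d * m)"
proof -
  have "S - m * z > 0"
    using assms by simp
  have "ln (k * e) + (e - 1) * ln z = ln (k * e * z powr (e - 1))"
    using assms(1,4,6) by (simp add: ln_mult_pos ln_powr)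
  also have "\<dots> = ln (b * d * m * (S - m * z) ^ (d - 1))"
    by (simp only: crit)
  also have "\<dots> = ln (b * d * m) + real (d - 1) * ln (S - m * z)"
    using assms \<open>S - m * z > 0\<close> by (simp add: ln_mult_pos ln_realpow)
  finally show ?thesis
    using assms by (simp add: of_nat_diff algebra_simps)
qed

lemma ln_slope_strict_antimono:
  fixes m e S w1 w2 :: real and d :: nat
  assumes "m > 0" "e < 1" "d \<ge> 1" "0 < w1" "w1 < w2" "m * w2 < S"
  shows "(1 - e) / w2 - (real d - 1) * (m / (S - m * w2)) < (1 - e) / w1 - (real d - 1) * (m / (S - m * w1))"
proof -
  have "(1 - e) / w2 < (1 - e) / w1"
    using assms by (simp add: divide_strict_left_mono)
  moreover have "m / (S - m * w1) \<le> m / (S - m * w2)"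
  proof -
    have "m * w1 < m * w2"
      using assms by simp
    then have "m * w1 < S"
      using assms by linarith
    then show ?thesis
      using assms by (auto intro!: divide_left_mono mult_pos_pos)
  qed
  then have "(real d - 1) * (m / (S - m * w1)) \<le> (real d - 1) * (m / (S - m * w2))"
    using assms by (intro mult_left_mono) auto
  ultimately show ?thesis
    by linarith
qed

lemma DERIV_const_diff_powr_diff_power:
  fixes c0 k e b m S y :: real and d :: nat
  shows "0 < y \<Longrightarrow> ((\<lambda>y. c0 - k * y powr e - b * (S - m * y) ^ d) has_real_derivative
    b * d * m * (S - m * y) ^ (d - 1) - k * e * y powr (e - 1)) (at y)"
  by (rule derivative_eq_intros refl | simp)+

lemma DERIV_ln_affine_plus_ln:
  fixes c e m S z :: real
  shows "0 < z \<Longrightarrow> m * z < S \<Longrightarrow> ((\<lambda>z. c * ln (S - m * z) + (1 - e) * ln z) has_real_derivative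
    (1 - e) / z - c * (m / (S - m * z))) (at z)"
  by (rule derivative_eq_intros refl | simp)+

lemma card_zeros_le_3:
  fixes c0 k b m e S :: real and d :: nat and Y :: "real set"
  assumes pos: "k > 0" "b > 0" "m > 0" and e: "0 < e" "e < 1" and d: "d \<ge> 1"
    and "finite Y" and Y: "\<And>y. y \<in> Y \<Longrightarrow> 0 < y \<and> m * y < S \<and> k * y powr e + b * (S - m * y) ^ d = c0"
  shows "card Y \<le> 3"
proof (rule ccontr)
  assume "\<not> card Y \<le> 3"
  then have "card Y \<ge> 4"
    by simp
  then obtain y1 y2 y3 y4 where y: "y1 \<in> Y" "y2 \<in> Y" "y3 \<in> Y" "y4 \<in> Y" "y1 < y2" "y2 < y3" "y3 < y4"
    by (rule card_ge_4_obtains_increasing[OF \<open>finite Y\<close>])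
  define F where "F = (\<lambda>y. c0 - k * y powr e - b * (S - m * y) ^ d)"
  define F' where "F' y = b * d * m * (S - m * y) ^ (d - 1) - k * e * y powr (e - 1)" for y
  have "F y = 0" if "y \<in> Y" for y
    using Y[OF that] unfolding F_def by linarith
  then have F: "F y1 = 0" "F y2 = 0" "F y3 = 0" "F y4 = 0"
    using y by simp_all
  have y1: "0 < y1" and y4: "m * y4 < S"
    using Y y by simp_all
  have dF: "(F has_real_derivative F' x) (at x)" if "0 < x" for x
    using DERIV_const_diff_powr_diff_power[OF that] unfolding F_def F'_def .
  obtain z1 where z1: "y1 < z1" "z1 < y2" "F' z1 = 0"
    by (rule Rolle_has_real_derivative[of y1 y2 F F']) (use y(5) F(1,2) dF y1 in auto)
  obtain z2 where z2: "y2 < z2" "z2 < y3" "F' z2 = 0"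
    by (rule Rolle_has_real_derivative[of y2 y3 F F']) (use y(5,6) F(2,3) dF y1 in auto)
  obtain z3 where z3: "y3 < z3" "z3 < y4" "F' z3 = 0"
    by (rule Rolle_has_real_derivative[of y3 y4 F F']) (use y(5-7) F(3,4) dF y1 in auto)
  have dom: "m * x < S" if "x \<le> y4" for x
    using mult_left_mono[OF that, of m] pos(3) y4 by linarith
  define L where "L = (\<lambda>z. (real d - 1) * ln (S - m * z) + (1 - e) * ln z)"
  define L' where "L' z = (1 - e) / z - (real d - 1) * (m / (S - m * z))" for z
  have dL: "(L has_real_derivative L' x) (at x)" if "0 < x" "x \<le> y4" for x
    using DERIV_ln_affine_plus_ln[OF that(1) dom[OF that(2)]] unfolding L_def L'_def .
  have L_eq: "L z = ln (k * e) - ln (b * d * m)" if "F' z = 0" "0 < z" "z \<le> y4" for z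
  proof -
    have "k * e * z powr (e - 1) = b * d * m * (S - m * z) ^ (d - 1)"
      using that(1) unfolding F'_def by simp
    from critical_point_ln_eq[OF pos e(1) d that(2) dom[OF that(3)] this] show ?thesis
      unfolding L_def by simp
  qed
  have L: "L z1 = L z2" "L z2 = L z3"
    using L_eq z1 z2 z3 y1 by simp_all
  obtain w1 where w1: "z1 < w1" "w1 < z2" "L' w1 = 0"
    by (rule Rolle_has_real_derivative[of z1 z2 L L']) (use z1 z2 z3 L(1) dL y1 in auto)
  obtain w2 where w2: "z2 < w2" "w2 < z3" "L' w2 = 0"
    by (rule Rolle_has_real_derivative[of z2 z3 L L']) (use z1 z2 z3 L(2) dL y1 in auto)
  have "L' w2 < L' w1"
    unfolding L'_def
    by (rule ln_slope_strict_antimono) (use pos e d w1 w2 z1 z3 y1 dom in auto)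
  with w1 w2 show False
    by simp
qed

lemma power_affine_eq_iff:
  fixes a m S x y :: real and d :: nat
  assumes "a > 0" "m \<noteq> 0" "d > 0" "0 < S - m * x" "0 < S - m * y"
  shows "a * (S - m * x) ^ d = a * (S - m * y) ^ d \<longleftrightarrow> x = y"
proof -
  have "a * (S - m * x) ^ d = a * (S - m * y) ^ d \<longleftrightarrow> (S - m * x) ^ d = (S - m * y) ^ d"
    using \<open>a > 0\<close> by simp
  also have "\<dots> \<longleftrightarrow> S - m * x = S - m * y"
    using assms by (intro power_eq_iff_eq_base) auto
  also have "\<dots> \<longleftrightarrow> x = y"
    using \<open>m \<noteq> 0\<close> by simp
  finally show ?thesis .
qed

lemma potts_fixpoint_sym: "potts_fixpoint q B d R C \<Longrightarrow> potts_fixpoint q B d C R"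
  unfolding potts_fixpoint_def by blast

lemma potts_fixpoint_total_sum_form:
  assumes "potts_fixpoint q B d R C" "0 \<le> B" "q \<ge> 2"
  shows "\<exists>a>0. \<forall>i<q. 0 < (\<Sum>j<q. C j) - (1 - B) * C i \<and> R i = a * ((\<Sum>j<q. C j) - (1 - B) * C i) ^ d"
proof -
  obtain a where "a > 0" and a: "\<And>i. i < q \<Longrightarrow> R i = a * (B * C i + (\<Sum>j\<in>{..<q}-{i}. C j)) ^ d"
    using assms(1) unfolding potts_fixpoint_def by blast
  have Cpos: "\<And>j. j < q \<Longrightarrow> C j > 0"
    using assms(1) unfolding potts_fixpoint_def by blast
  have "0 < (\<Sum>j<q. C j) - (1 - B) * C i \<and> R i = a * ((\<Sum>j<q. C j) - (1 - B) * C i) ^ d"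
    if "i < q" for i
  proof -
    have sum_eq: "B * C i + (\<Sum>j\<in>{..<q}-{i}. C j) = (\<Sum>j<q. C j) - (1 - B) * C i"
      using that by (simp add: sum_diff1 algebra_simps)
    define j where "j = (if i = 0 then 1 else 0 :: nat)"
    have "j < q" "j \<noteq> i"
      using assms(3) unfolding j_def by auto
    then have "0 < (\<Sum>j\<in>{..<q}-{i}. C j)"
      using Cpos by (intro sum_pos2[of _ j]) (auto intro!: less_imp_le)
    moreover have "0 \<le> B * C i"
      using assms(2) Cpos[OF that] by simp
    ultimately have "0 < (\<Sum>j<q. C j) - (1 - B) * C i"
      using sum_eq by linarith
    with a[OF that] sum_eq show ?thesis
      by simp
  qed
  then show ?thesis
    using \<open>a > 0\<close> by blast
qed

lemma potts_fixpoint_same_level_sets: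
  assumes "potts_fixpoint q B d R C" "0 \<le> B" "B < 1" "q \<ge> 2" "d \<ge> 1" "i < q" "j < q"
  shows "R i = R j \<longleftrightarrow> C i = C j"
proof -
  obtain a where "a > 0" and R: "\<forall>i<q. 0 < (\<Sum>j<q. C j) - (1 - B) * C i \<and> R i = a * ((\<Sum>j<q. C j) - (1 - B) * C i) ^ d"
    using potts_fixpoint_total_sum_form[OF assms(1,2,4)] by blast
  then show ?thesis
    using power_affine_eq_iff[of a "1 - B" d "\<Sum>j<q. C j" "C i" "C j"] assms(3,5-7) by simp
qed

lemma potts_fixpoint_card_image_le_3:
  assumes "potts_fixpoint q B d R C" "0 \<le> B" "B < 1" "q \<ge> 2" "d \<ge> 2"
  shows "card (R ` {..<q}) \<le> 3"
proof -
  define SR SC where "SR = (\<Sum>j<q. R j)" and "SC = (\<Sum>j<q. C j)"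
  obtain a where "a > 0" and R: "\<And>i. i < q \<Longrightarrow> 0 < SC - (1 - B) * C i \<and> R i = a * (SC - (1 - B) * C i) ^ d"
    using potts_fixpoint_total_sum_form[OF assms(1,2,4)] unfolding SC_def by blast
  obtain b where "b > 0" and C: "\<And>i. i < q \<Longrightarrow> 0 < SR - (1 - B) * R i \<and> C i = b * (SR - (1 - B) * R i) ^ d"
    using potts_fixpoint_total_sum_form[OF potts_fixpoint_sym[OF assms(1)] assms(2,4)] unfolding SR_def by blast
  have "0 < R i \<and> (1 - B) * R i < SR \<and>
      (1 / a) powr (1 / d) * R i powr (1 / d) + (1 - B) * b * (SR - (1 - B) * R i) ^ d = SC"
    if "i < q" for i
  proof -
    have "0 < R i" "(1 - B) * R i < SR"
      using assms(1) C[OF that] that unfolding potts_fixpoint_def by auto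
    have "(1 / a) powr (1 / d) * R i powr (1 / d) = (R i / a) powr (1 / d)"
      using \<open>a > 0\<close> R[OF that] by (simp add: powr_mult[symmetric])
    also have "\<dots> = SC - (1 - B) * C i"
      using R[OF that] \<open>a > 0\<close> assms(5) by (simp add: powr_realpow[symmetric] powr_powr)
    finally show ?thesis
      using C[OF that] \<open>0 < R i\<close> \<open>(1 - B) * R i < SR\<close> by simp
  qed
  then show ?thesis
    using \<open>a > 0\<close> \<open>b > 0\<close> assms(3,5)
    by (intro card_zeros_le_3[of "(1 / a) powr (1 / d)" "(1 - B) * b" "1 - B" "1 / d" d]) auto
qed

theorem lemma28:
  fixes q \<Delta> d :: nat and B :: real and R C :: "nat \<Rightarrow> real"
  assumes "0 \<le> B" "B < 1" "q \<ge> 3" "\<Delta> \<ge> 3" "d = \<Delta> - 1"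
    and "potts_fixpoint q B d R C"
  shows "card (R ` {..<q}) \<le> 3 \<and> card (C ` {..<q}) \<le> 3 \<and>
         card (R ` {..<q}) = card (C ` {..<q})"
proof -
  have "d \<ge> 2" "q \<ge> 2"
    using assms(3-5) by simp_all
  then have "card (R ` {..<q}) = card (C ` {..<q})"
    using potts_fixpoint_same_level_sets[OF assms(6,1,2)]
    by (intro card_image_eq_if_same_level_sets) auto
  moreover have "card (R ` {..<q}) \<le> 3"
    using potts_fixpoint_card_image_le_3[OF assms(6,1,2)] \<open>d \<ge> 2\<close> \<open>q \<ge> 2\<close> by simp
  ultimately show ?thesis
    by simp
qed

end
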